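(* Let $n\in\mathbb{N}$. If $\mathbf{s}=(s_0,\ldots,s_n)\subset[0,\infty)$ is strictly positive on $(0,\infty)$, then $T_\infty(\mathbf{s})=\infty$.
   Context: For $a<b$, $\mathbf{s}$ is strictly positive on $[a,b]$ if the functional $\sigma(x^k)=s_k$ on real polynomials of degree $\le n$ satisfies $\sigma(P)\ge0$ for all $P\ge0$ on $[a,b]$ and $\sigma(P)>0$ for all such $P\not\equiv0$; strictly positive on $(0,\infty)$ means strictly positive on some $[a,b]\subset(0,\infty)$. $\mathcal{M}_{a,b}(\mathbf{s})$ is the set of positive Borel measures on $[a,b]$ with $k$-th moments $s_k$; $T_{a,b}(\mathbf{s})=\sup\{\int_{[a,b]}\frac1t\,d\mu:\mu\in\mathcal{M}_{a,b}(\mathbf{s})\}$ (with $\sup\varnothing=-\infty$) and $T_\infty(\mathbf{s})=\sup_{0<a<b}T_{a,b}(\mathbf{s})$. *)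

theory Defs
  imports "HOL-Analysis.Analysis" "HOL-Computational_Algebra.Polynomial"
begin

definition moment_functional :: "nat \<Rightarrow> (nat \<Rightarrow> real) \<Rightarrow> real poly \<Rightarrow> real" where
  "moment_functional n s P = (\<Sum>k\<le>n. coeff P k * s k)"

definition strictly_positive_on :: "nat \<Rightarrow> (nat \<Rightarrow> real) \<Rightarrow> real \<Rightarrow> real \<Rightarrow> bool" where
  "strictly_positive_on n s a b \<longleftrightarrow> a < b \<and>
     (\<forall>P. degree P \<le> n \<and> (\<forall>x\<in>{a..b}. poly P x \<ge> 0) \<longrightarrow> moment_functional n s P \<ge> 0) \<and>
     (\<forall>P. degree P \<le> n \<and> (\<forall>x\<in>{a..b}. poly P x \<ge> 0) \<and> P \<noteq> 0 \<longrightarrow> moment_functional n s P > 0)"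

definition strictly_positive_pos :: "nat \<Rightarrow> (nat \<Rightarrow> real) \<Rightarrow> bool" where
  "strictly_positive_pos n s \<longleftrightarrow> (\<exists>a b. 0 < a \<and> a < b \<and> strictly_positive_on n s a b)"

definition moment_measures :: "nat \<Rightarrow> (nat \<Rightarrow> real) \<Rightarrow> real \<Rightarrow> real \<Rightarrow> real measure set" where
  "moment_measures n s a b = {\<mu>. sets \<mu> = sets (restrict_space borel {a..b}) \<and>
      (\<forall>k\<le>n. integrable \<mu> (\<lambda>t. t ^ k) \<and> (\<integral>t. t ^ k \<partial>\<mu>) = s k)}"

text \<open>T_{a,b}(s) = sup of integral of 1/t over M_{a,b}(s); Sup {} = -infinity in ereal.\<close>
definition T_ab :: "nat \<Rightarrow> (nat \<Rightarrow> real) \<Rightarrow> real \<Rightarrow> real \<Rightarrow> ereal" where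
  "T_ab n s a b = (SUP \<mu>\<in>moment_measures n s a b. ereal (\<integral>t. 1 / t \<partial>\<mu>))"

definition T_inf :: "nat \<Rightarrow> (nat \<Rightarrow> real) \<Rightarrow> ereal" where
  "T_inf n s = (SUP ab\<in>{(a, b). 0 < a \<and> a < b}. T_ab n s (fst ab) (snd ab))"

end

theory Submission
  imports Defs
begin

text \<open>
  Strict positivity of \<open>\<sigma>\<close> on \<open>[a, b] \<subseteq> (0, \<infinity>)\<close> is an open condition: by compactness of the
  normalized nonnegative polynomials there is a margin \<open>\<delta> > 0\<close> with \<open>\<sigma>(P) \<ge> \<delta> \<parallel>P\<parallel>\<^sub>1\<close> for
  all \<open>P \<ge> 0\<close> on \<open>[a, b]\<close>. The margin survives removing an atom of mass \<open>w < \<delta>\<close> at any point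
  \<open>0 < c < a\<close>, and a functional with a margin on \<open>[a, b]\<close> is the moment functional of a finitely
  atomic measure on \<open>[a, b]\<close>: fit its moments by nonnegative least squares with atoms on a fine
  grid; the residual polynomial is nonnegative on the grid, hence (being Lipschitz) almost
  nonnegative on \<open>[a, b]\<close>, and the margin then forces the residual to vanish. Putting the atom back
  yields a representing measure on \<open>[c, b]\<close> with \<open>\<integral> 1/t \<ge> w/c\<close>, which is unbounded as \<open>c \<rightarrow> 0\<close>.
\<close>

lemma continuous_map_attains_min:
  assumes "compactin X S" "S \<noteq> {}" "continuous_map X euclideanreal f"
  obtains x where "x \<in> S" "\<And>y. y \<in> S \<Longrightarrow> f x \<le> f y"
proof -
  have "compact (f ` S)" using image_compactin[OF assms(1,3)] by simp
  then obtain m where "m \<in> f ` S" "\<forall>t\<in>f ` S. m \<le> t"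
    using compact_attains_inf assms(2) by (metis image_is_empty)
  then show ?thesis using that by blast
qed

lemma abs_power_diff_le:
  fixes x y B :: real
  assumes "\<bar>x\<bar> \<le> B" "\<bar>y\<bar> \<le> B" "1 \<le> B"
  shows "\<bar>x ^ k - y ^ k\<bar> \<le> real k * B ^ k * \<bar>x - y\<bar>"
proof (induction k)
  case (Suc k)
  have "\<bar>x ^ Suc k - y ^ Suc k\<bar> \<le> \<bar>x\<bar> * \<bar>x ^ k - y ^ k\<bar> + \<bar>y\<bar> ^ k * \<bar>x - y\<bar>"
  proof -
    have "x ^ Suc k - y ^ Suc k = x * (x ^ k - y ^ k) + y ^ k * (x - y)"
      by (simp add: algebra_simps)
    then show ?thesis
      using abs_triangle_ineq[of "x * (x ^ k - y ^ k)" "y ^ k * (x - y)"]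
      by (simp add: abs_mult power_abs)
  qed
  also have "\<dots> \<le> B * (real k * B ^ k * \<bar>x - y\<bar>) + B ^ Suc k * \<bar>x - y\<bar>"
  proof (intro add_mono mult_mono mult_right_mono)
    have "\<bar>y\<bar> ^ k \<le> B ^ k" using assms by (simp add: power_mono)
    also have "\<dots> \<le> B ^ Suc k" using assms by (intro power_increasing) auto
    finally show "\<bar>y\<bar> ^ k \<le> B ^ Suc k" .
  qed (use Suc assms in auto)
  also have "\<dots> = real (Suc k) * B ^ Suc k * \<bar>x - y\<bar>" by (simp add: algebra_simps)
  finally show ?case .
qed simp

lemma sum_atMost_delta_0:
  fixes f :: "nat \<Rightarrow> 'a::semiring_0"
  shows "(\<Sum>k\<le>n. (if k = 0 then c else 0) * f k) = c * f 0"
  by (induction n) auto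

lemma nonneg_if_quadratic_nonneg_near_0:
  fixes B C e0 :: real
  assumes quad: "\<And>e. 0 < e \<Longrightarrow> e \<le> e0 \<Longrightarrow> 0 \<le> e * B + e\<^sup>2 * C" and "0 < e0" "0 \<le> C"
  shows "0 \<le> B"
proof (rule ccontr)
  assume "\<not> 0 \<le> B"
  define e where "e = min e0 (- B / (C + 1))"
  have e: "0 < e" "e \<le> e0" using assms \<open>\<not> 0 \<le> B\<close> by (auto simp: e_def divide_neg_pos)
  have "e * C \<le> - B / (C + 1) * C" using assms by (intro mult_right_mono) (auto simp: e_def)
  also have "\<dots> < - B" using assms \<open>\<not> 0 \<le> B\<close> by (simp add: field_simps)
  finally have "e * (B + e * C) < 0" using e by (simp add: mult_pos_neg)
  with quad[OF e] show False by (simp add: power2_eq_square algebra_simps)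
qed

lemma sum_square_add_scaled:
  fixes u v :: "'a \<Rightarrow> real"
  shows "(\<Sum>k\<in>K. (u k + e * v k)\<^sup>2) =
           (\<Sum>k\<in>K. (u k)\<^sup>2) + e * (2 * (\<Sum>k\<in>K. u k * v k)) + e\<^sup>2 * (\<Sum>k\<in>K. (v k)\<^sup>2)"
  by (simp add: power2_eq_square algebra_simps sum.distrib sum_distrib_left)

section \<open>Coefficient vectors of polynomials\<close>

text \<open>
  A polynomial of degree at most \<open>n\<close> is handled through its coefficients \<open>q 0, \<dots>, q n\<close> (values of
  \<open>q\<close> beyond \<open>n\<close> are ignored), so that compactness arguments can use the product topology on \<open>{..n}\<close>.
\<close>

definition coeffs_eval :: "nat \<Rightarrow> (nat \<Rightarrow> real) \<Rightarrow> real \<Rightarrow> real" where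
  "coeffs_eval n q x = (\<Sum>k\<le>n. q k * x ^ k)"

definition moment_pairing :: "nat \<Rightarrow> (nat \<Rightarrow> real) \<Rightarrow> (nat \<Rightarrow> real) \<Rightarrow> real" where
  "moment_pairing n z q = (\<Sum>k\<le>n. q k * z k)"

definition coeffs_norm :: "nat \<Rightarrow> (nat \<Rightarrow> real) \<Rightarrow> real" where
  "coeffs_norm n q = (\<Sum>k\<le>n. \<bar>q k\<bar>)"

definition poly_of_coeffs :: "nat \<Rightarrow> (nat \<Rightarrow> real) \<Rightarrow> real poly" where
  "poly_of_coeffs n q = (\<Sum>k\<le>n. monom (q k) k)"

lemma coeffs_norm_nonneg: "0 \<le> coeffs_norm n q"
  by (simp add: coeffs_norm_def sum_nonneg)

lemma abs_coeffs_eval_le_coeffs_norm: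
  assumes "\<bar>x\<bar> \<le> 1"
  shows "\<bar>coeffs_eval n q x\<bar> \<le> coeffs_norm n q"
  unfolding coeffs_eval_def coeffs_norm_def
proof (rule order.trans[OF sum_abs], rule sum_mono)
  fix k
  have "\<bar>x ^ k\<bar> \<le> 1" using assms by (simp add: power_abs power_le_one)
  then show "\<bar>q k * x ^ k\<bar> \<le> \<bar>q k\<bar>" by (simp add: abs_mult mult_left_le)
qed

lemma coeffs_eval_lipschitz:
  fixes x y B :: real
  assumes "\<bar>x\<bar> \<le> B" "\<bar>y\<bar> \<le> B" "1 \<le> B"
  shows "\<bar>coeffs_eval n q x - coeffs_eval n q y\<bar> \<le> real n * B ^ n * coeffs_norm n q * \<bar>x - y\<bar>"
proof -
  have "\<bar>coeffs_eval n q x - coeffs_eval n q y\<bar> = \<bar>\<Sum>k\<le>n. q k * (x ^ k - y ^ k)\<bar>"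
    by (simp add: coeffs_eval_def sum_subtractf algebra_simps)
  also have "\<dots> \<le> (\<Sum>k\<le>n. \<bar>q k\<bar> * (real n * B ^ n * \<bar>x - y\<bar>))"
  proof (rule order.trans[OF sum_abs], rule sum_mono)
    fix k assume "k \<in> {..n}"
    then have "real k * B ^ k * \<bar>x - y\<bar> \<le> real n * B ^ n * \<bar>x - y\<bar>"
      using assms by (intro mult_right_mono mult_mono power_increasing) auto
    with abs_power_diff_le[OF assms, of k]
    show "\<bar>q k * (x ^ k - y ^ k)\<bar> \<le> \<bar>q k\<bar> * (real n * B ^ n * \<bar>x - y\<bar>)"
      by (simp add: abs_mult mult_left_mono)
  qed
  also have "\<dots> = real n * B ^ n * coeffs_norm n q * \<bar>x - y\<bar>"
    by (simp add: coeffs_norm_def sum_distrib_right sum_distrib_left algebra_simps)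
  finally show ?thesis .
qed

lemma coeff_poly_of_coeffs: "coeff (poly_of_coeffs n q) k = (if k \<le> n then q k else 0)"
  by (auto simp: poly_of_coeffs_def coeff_sum)

lemma degree_poly_of_coeffs: "degree (poly_of_coeffs n q) \<le> n"
  unfolding poly_of_coeffs_def
  by (rule degree_sum_le) (auto intro: order.trans[OF degree_monom_le])

lemma poly_poly_of_coeffs: "poly (poly_of_coeffs n q) x = coeffs_eval n q x"
  by (simp add: poly_of_coeffs_def coeffs_eval_def poly_sum poly_monom)

lemma moment_functional_poly_of_coeffs: "moment_functional n s (poly_of_coeffs n q) = moment_pairing n s q"
  by (simp add: moment_functional_def moment_pairing_def coeff_poly_of_coeffs)

lemma poly_of_coeffs_eq_0_iff: "poly_of_coeffs n q = 0 \<longleftrightarrow> coeffs_norm n q = 0"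
proof
  assume "poly_of_coeffs n q = 0"
  then have "\<forall>k\<le>n. q k = 0" by (metis coeff_poly_of_coeffs coeff_0)
  then show "coeffs_norm n q = 0" by (simp add: coeffs_norm_def)
next
  assume "coeffs_norm n q = 0"
  then have "\<forall>k\<in>{..n}. \<bar>q k\<bar> = 0"
    unfolding coeffs_norm_def by (subst sum_nonneg_eq_0_iff[symmetric]) auto
  then have "\<forall>k\<le>n. q k = 0" by simp
  then show "poly_of_coeffs n q = 0" by (simp add: poly_of_coeffs_def)
qed

lemma
  shows continuous_map_coeffs_eval:
      "continuous_map (product_topology (\<lambda>_. euclideanreal) {..n}) euclideanreal (\<lambda>q. coeffs_eval n q x)"
    and continuous_map_moment_pairing:
      "continuous_map (product_topology (\<lambda>_. euclideanreal) {..n}) euclideanreal (\<lambda>q. moment_pairing n z q)"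
    and continuous_map_coeffs_norm:
      "continuous_map (product_topology (\<lambda>_. euclideanreal) {..n}) euclideanreal (\<lambda>q. coeffs_norm n q)"
  unfolding coeffs_eval_def moment_pairing_def coeffs_norm_def
  by (intro continuous_intros continuous_map_product_projection; simp)+

lemma compactin_normalized_nonneg_coeffs:
  assumes "A \<noteq> {}"
  shows "compactin (product_topology (\<lambda>_. euclideanreal) {..n})
           {q \<in> PiE {..n} (\<lambda>_. {-1..1}). coeffs_norm n q = 1 \<and> (\<forall>x\<in>A. 0 \<le> coeffs_eval n q x)}"
    (is "compactin ?X ?S")
proof (rule closed_compactin)
  let ?K = "PiE {..n} (\<lambda>_. {-1..1::real})"
  show "compactin ?X ?K" by (simp add: compactin_PiE)
  then have "closedin ?X ?K"
    by (intro compactin_imp_closedin) (auto simp: Hausdorff_space_product_topology)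
  moreover have "closedin ?X {q \<in> topspace ?X. coeffs_norm n q \<in> {1}}"
    by (rule closedin_continuous_map_preimage[OF continuous_map_coeffs_norm]) auto
  moreover have "closedin ?X (\<Inter>x\<in>A. {q \<in> topspace ?X. coeffs_eval n q x \<in> {0..}})"
    using assms closedin_continuous_map_preimage[OF continuous_map_coeffs_eval, where C="{0..}"]
    by (intro closedin_Inter) auto
  ultimately have "closedin ?X (?K \<inter> {q \<in> topspace ?X. coeffs_norm n q \<in> {1}} \<inter>
                      (\<Inter>x\<in>A. {q \<in> topspace ?X. coeffs_eval n q x \<in> {0..}}))"
    by (intro closedin_Int)
  also have "?K \<inter> {q \<in> topspace ?X. coeffs_norm n q \<in> {1}} \<inter>
               (\<Inter>x\<in>A. {q \<in> topspace ?X. coeffs_eval n q x \<in> {0..}}) = ?S"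
    using assms by auto
  finally show "closedin ?X ?S" .
qed auto

lemma normalize_coeffs:
  assumes N: "0 < coeffs_norm n q"
  obtains q' where "q' \<in> PiE {..n} (\<lambda>_. {-1..1})" "coeffs_norm n q' = 1"
    "\<And>x. coeffs_eval n q' x = coeffs_eval n q x / coeffs_norm n q"
    "\<And>z. moment_pairing n z q' = moment_pairing n z q / coeffs_norm n q"
proof
  let ?q' = "restrict (\<lambda>k. q k / coeffs_norm n q) {..n}"
  have "q k / coeffs_norm n q \<in> {-1..1}" if "k \<le> n" for k
  proof -
    have "\<bar>q k\<bar> \<le> coeffs_norm n q"
      using member_le_sum[of k "{..n}" "\<lambda>k. \<bar>q k\<bar>"] that by (simp add: coeffs_norm_def)
    then show ?thesis using N by (auto simp: abs_le_iff field_simps)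
  qed
  then show "?q' \<in> PiE {..n} (\<lambda>_. {-1..1})" by simp
  show "coeffs_norm n ?q' = 1"
    using N by (simp add: coeffs_norm_def sum_divide_distrib[symmetric])
  show "coeffs_eval n ?q' x = coeffs_eval n q x / coeffs_norm n q" for x
    by (simp add: coeffs_eval_def sum_divide_distrib)
  show "moment_pairing n z ?q' = moment_pairing n z q / coeffs_norm n q" for z
    by (simp add: moment_pairing_def sum_divide_distrib)
qed

section \<open>Uniform positivity\<close>

definition uniformly_positive_on :: "nat \<Rightarrow> (nat \<Rightarrow> real) \<Rightarrow> real \<Rightarrow> real \<Rightarrow> real \<Rightarrow> bool" where
  "uniformly_positive_on n z a b \<delta> \<longleftrightarrow>
     (\<forall>q. (\<forall>x\<in>{a..b}. 0 \<le> coeffs_eval n q x) \<longrightarrow> \<delta> * coeffs_norm n q \<le> moment_pairing n z q)"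

lemma strictly_positive_on_pairing_nonneg:
  assumes "strictly_positive_on n s a b" "\<forall>x\<in>{a..b}. 0 \<le> coeffs_eval n q x"
  shows "0 \<le> moment_pairing n s q"
  using assms degree_poly_of_coeffs unfolding strictly_positive_on_def
  by (metis moment_functional_poly_of_coeffs poly_poly_of_coeffs)

lemma strictly_positive_on_pairing_pos:
  assumes "strictly_positive_on n s a b" "\<forall>x\<in>{a..b}. 0 \<le> coeffs_eval n q x" "coeffs_norm n q \<noteq> 0"
  shows "0 < moment_pairing n s q"
  using assms degree_poly_of_coeffs poly_of_coeffs_eq_0_iff unfolding strictly_positive_on_def
  by (metis moment_functional_poly_of_coeffs poly_poly_of_coeffs)

lemma strictly_positive_on_imp_uniformly_positive_on:
  assumes spo: "strictly_positive_on n s a b"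
  obtains \<delta> where "0 < \<delta>" "uniformly_positive_on n s a b \<delta>"
proof -
  let ?S = "{q \<in> PiE {..n} (\<lambda>_. {-1..1}). coeffs_norm n q = 1 \<and> (\<forall>x\<in>{a..b}. 0 \<le> coeffs_eval n q x)}"
  have ab: "a < b" using spo by (simp add: strictly_positive_on_def)
  have "\<exists>\<delta>>0. \<forall>q\<in>?S. \<delta> \<le> moment_pairing n s q"
  proof (cases "?S = {}")
    case True
    then show ?thesis using zero_less_one by blast
  next
    case False
    have "{a..b} \<noteq> {}" using ab by simp
    then obtain q0 where q0: "q0 \<in> ?S" "\<And>q. q \<in> ?S \<Longrightarrow> moment_pairing n s q0 \<le> moment_pairing n s q"
      by (rule continuous_map_attains_min[OF compactin_normalized_nonneg_coeffs False
            continuous_map_moment_pairing]; blast)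
    have "0 < moment_pairing n s q0"
      using q0(1) by (intro strictly_positive_on_pairing_pos[OF spo]) auto
    with q0 show ?thesis by blast
  qed
  then obtain \<delta> where \<delta>: "0 < \<delta>" "\<And>q. q \<in> ?S \<Longrightarrow> \<delta> \<le> moment_pairing n s q" by blast
  have "\<delta> * coeffs_norm n q \<le> moment_pairing n s q" if q: "\<forall>x\<in>{a..b}. 0 \<le> coeffs_eval n q x" for q
  proof (cases "coeffs_norm n q = 0")
    case True
    then show ?thesis using strictly_positive_on_pairing_nonneg[OF spo q] by simp
  next
    case False
    then have N: "0 < coeffs_norm n q" using coeffs_norm_nonneg[of n q] by simp
    then obtain q' where "q' \<in> PiE {..n} (\<lambda>_. {-1..1})" "coeffs_norm n q' = 1"
      "\<And>x. coeffs_eval n q' x = coeffs_eval n q x / coeffs_norm n q"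
      and pairing: "\<And>z. moment_pairing n z q' = moment_pairing n z q / coeffs_norm n q"
      by (rule normalize_coeffs; blast)
    then have "q' \<in> ?S" using q N by auto
    then have "\<delta> \<le> moment_pairing n s q'" by (rule \<delta>(2))
    then have "\<delta> \<le> moment_pairing n s q / coeffs_norm n q" by (simp only: pairing)
    then show ?thesis using N by (simp add: le_divide_eq)
  qed
  with \<delta>(1) show ?thesis using that by (auto simp: uniformly_positive_on_def)
qed

lemma uniformly_positive_on_remove_atom:
  assumes "uniformly_positive_on n s a b \<delta>" "0 \<le> w" "\<bar>c\<bar> \<le> 1"
  shows "uniformly_positive_on n (\<lambda>k. s k - w * c ^ k) a b (\<delta> - w)"
  unfolding uniformly_positive_on_def
proof (intro allI impI)
  fix q assume q: "\<forall>x\<in>{a..b}. 0 \<le> coeffs_eval n q x"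
  have "moment_pairing n (\<lambda>k. s k - w * c ^ k) q = moment_pairing n s q - w * coeffs_eval n q c"
    by (simp add: moment_pairing_def coeffs_eval_def algebra_simps sum_subtractf sum_distrib_left)
  moreover have "w * coeffs_eval n q c \<le> w * coeffs_norm n q"
    using abs_coeffs_eval_le_coeffs_norm[OF assms(3), of n q] assms(2)
    by (intro mult_left_mono) (auto simp: abs_le_iff)
  moreover have "\<delta> * coeffs_norm n q \<le> moment_pairing n s q"
    using assms(1) q by (simp add: uniformly_positive_on_def)
  ultimately show "(\<delta> - w) * coeffs_norm n q \<le> moment_pairing n (\<lambda>k. s k - w * c ^ k) q"
    by (simp add: algebra_simps)
qed

lemma uniformly_positive_on_almost_nonneg:
  assumes up: "uniformly_positive_on n z a b \<delta>" and "0 \<le> \<delta>" "0 \<le> c"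
    and almost_nonneg: "\<forall>x\<in>{a..b}. - c \<le> coeffs_eval n q x"
  shows "\<delta> * coeffs_norm n q - c * (\<delta> + \<bar>z 0\<bar>) \<le> moment_pairing n z q"
proof -
  define r where "r = (\<lambda>k. q k + (if k = 0 then c else 0))"
  have "coeffs_eval n r x = coeffs_eval n q x + c" for x
    by (simp add: coeffs_eval_def r_def sum.distrib distrib_right sum_atMost_delta_0)
  then have "0 \<le> coeffs_eval n r x" if "x \<in> {a..b}" for x
    using almost_nonneg that by fastforce
  then have "\<delta> * coeffs_norm n r \<le> moment_pairing n z r"
    using up unfolding uniformly_positive_on_def by blast
  moreover have "\<delta> * (coeffs_norm n q - c) \<le> \<delta> * coeffs_norm n r"
  proof -
    have "coeffs_norm n q \<le> (\<Sum>k\<le>n. \<bar>r k\<bar> + (if k = 0 then c else 0))"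
      unfolding coeffs_norm_def r_def using \<open>0 \<le> c\<close> by (intro sum_mono) auto
    then have "coeffs_norm n q - c \<le> coeffs_norm n r" by (simp add: coeffs_norm_def sum.distrib)
    then show ?thesis using \<open>0 \<le> \<delta>\<close> by (rule mult_left_mono)
  qed
  moreover have "moment_pairing n z r = moment_pairing n z q + c * z 0"
    by (simp add: moment_pairing_def r_def sum.distrib distrib_right sum_atMost_delta_0)
  moreover have "c * z 0 \<le> c * \<bar>z 0\<bar>" using \<open>0 \<le> c\<close> by (intro mult_left_mono) auto
  ultimately show ?thesis by (simp add: algebra_simps)
qed

lemma uniformly_positive_on_finite_grid:
  assumes up: "uniformly_positive_on n z a b \<delta>" and "0 < \<delta>"
  obtains G where "finite G" "G \<subseteq> {a..b}"
    "\<And>q. \<forall>t\<in>G. 0 \<le> coeffs_eval n q t \<Longrightarrow> 0 \<le> moment_pairing n z q"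
proof -
  define B where "B = max 1 (max \<bar>a\<bar> \<bar>b\<bar>)"
  define L where "L = real n * B ^ n"
  define K where "K = L * (\<delta> + \<bar>z 0\<bar>)"
  define h where "h = \<delta> / (K + 1)"
  have B: "1 \<le> B" "\<And>y. y \<in> {a..b} \<Longrightarrow> \<bar>y\<bar> \<le> B"
    unfolding B_def by (auto simp: abs_le_iff)
  have L: "0 \<le> L" using B(1) by (simp add: L_def)
  then have "0 \<le> K" using \<open>0 < \<delta>\<close> by (simp add: K_def)
  then have h: "0 < h" "h * K \<le> \<delta>"
    using \<open>0 < \<delta>\<close> by (auto simp: h_def field_simps)
  obtain G where G: "finite G" "G \<subseteq> {a..b}" "{a..b} \<subseteq> (\<Union>t\<in>G. ball t h)"
    using seq_compact_imp_totally_bounded[OF compact_imp_seq_compact[OF compact_Icc[of a b]], rule_format, OF h(1)]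
    by (elim exE conjE)
  show ?thesis
  proof (rule that[OF G(1,2)])
    fix q assume q: "\<forall>t\<in>G. 0 \<le> coeffs_eval n q t"
    \<comment> \<open>\<open>q\<close> is \<open>L \<parallel>q\<parallel>\<^sub>1\<close>-Lipschitz on \<open>[a, b]\<close> and every point is within \<open>h\<close> of the grid.\<close>
    define c where "c = h * L * coeffs_norm n q"
    have c: "0 \<le> c" using h L coeffs_norm_nonneg[of n q] by (simp add: c_def)
    have "- c \<le> coeffs_eval n q x" if x: "x \<in> {a..b}" for x
    proof -
      obtain t where t: "t \<in> G" "\<bar>x - t\<bar> < h" using G(3) x by (force simp: dist_real_def)
      have "\<bar>coeffs_eval n q x - coeffs_eval n q t\<bar> \<le> L * coeffs_norm n q * \<bar>x - t\<bar>"
        unfolding L_def using x t(1) G(2) B by (intro coeffs_eval_lipschitz) auto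
      also have "\<dots> \<le> c"
        using mult_right_mono[of "\<bar>x - t\<bar>" h "L * coeffs_norm n q"] t(2) L coeffs_norm_nonneg[of n q]
        by (simp add: c_def algebra_simps)
      finally show ?thesis using q t(1) by (auto simp: abs_le_iff)
    qed
    then have "\<delta> * coeffs_norm n q - c * (\<delta> + \<bar>z 0\<bar>) \<le> moment_pairing n z q"
      using \<open>0 < \<delta>\<close> c by (intro uniformly_positive_on_almost_nonneg[OF up]) auto
    moreover have "c * (\<delta> + \<bar>z 0\<bar>) \<le> \<delta> * coeffs_norm n q"
      using mult_right_mono[OF h(2) coeffs_norm_nonneg[of n q]] by (simp add: c_def K_def algebra_simps)
    ultimately show "0 \<le> moment_pairing n z q" by linarith
  qed
qed

section \<open>Nonnegative least squares for atomic moments\<close>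

definition atomic_moment :: "real set \<Rightarrow> (real \<Rightarrow> real) \<Rightarrow> nat \<Rightarrow> real" where
  "atomic_moment G w k = (\<Sum>t\<in>G. w t * t ^ k)"

lemma atomic_moment_linear:
  "atomic_moment G (\<lambda>t. w t + e * d t) k = atomic_moment G w k + e * atomic_moment G d k"
  by (simp add: atomic_moment_def algebra_simps sum.distrib sum_distrib_left)

definition moment_misfit :: "nat \<Rightarrow> (nat \<Rightarrow> real) \<Rightarrow> real set \<Rightarrow> (real \<Rightarrow> real) \<Rightarrow> real" where
  "moment_misfit n z G w = (\<Sum>k\<le>n. (atomic_moment G w k - z k)\<^sup>2)"

lemma moment_misfit_restrict: "moment_misfit n z G (restrict w G) = moment_misfit n z G w"
  by (simp add: moment_misfit_def atomic_moment_def)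

lemma moment_misfit_heavy_atom:
  assumes "finite G" "\<forall>s\<in>G. 0 \<le> v s" "t \<in> G"
    and heavy: "\<bar>z 0\<bar> + moment_misfit n z G (\<lambda>_. 0) + 1 < v t"
  shows "moment_misfit n z G (\<lambda>_. 0) < moment_misfit n z G v"
proof -
  let ?Z = "moment_misfit n z G (\<lambda>_. 0)"
  have "0 \<le> ?Z" by (simp add: moment_misfit_def sum_nonneg)
  have "v t \<le> atomic_moment G v 0"
    using member_le_sum[of t G v] assms by (simp add: atomic_moment_def)
  then have "?Z + 1 < atomic_moment G v 0 - z 0" using heavy by simp
  then have "?Z + 1 < (atomic_moment G v 0 - z 0)\<^sup>2"
    using \<open>0 \<le> ?Z\<close> by (smt (verit) power2_eq_square mult_le_cancel_left1)
  also have "\<dots> \<le> moment_misfit n z G v"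
    unfolding moment_misfit_def by (rule member_le_sum) auto
  finally show ?thesis by simp
qed

lemma moment_misfit_attains_min:
  assumes "finite G"
  obtains w where "\<forall>t\<in>G. 0 \<le> w t"
    "\<And>v. \<forall>t\<in>G. 0 \<le> v t \<Longrightarrow> moment_misfit n z G w \<le> moment_misfit n z G v"
proof -
  \<comment> \<open>Heavier atoms fit worse than the zero measure, so minimizing over the box \<open>[0, W]\<^sup>G\<close> suffices.\<close>
  define W where "W = \<bar>z 0\<bar> + moment_misfit n z G (\<lambda>_. 0) + 1"
  have "0 \<le> W" by (simp add: W_def moment_misfit_def sum_nonneg)
  have "compactin (product_topology (\<lambda>_. euclideanreal) G) (PiE G (\<lambda>_. {0..W}))"
    by (simp add: compactin_PiE)
  moreover have "PiE G (\<lambda>_. {0..W}) \<noteq> {}" using \<open>0 \<le> W\<close> by (simp add: PiE_eq_empty_iff)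
  moreover have "continuous_map (product_topology (\<lambda>_. euclideanreal) G) euclideanreal (moment_misfit n z G)"
    unfolding moment_misfit_def atomic_moment_def
    by (intro continuous_intros continuous_map_product_projection) (auto simp: assms)
  ultimately obtain w where w: "w \<in> PiE G (\<lambda>_. {0..W})"
    "\<And>v. v \<in> PiE G (\<lambda>_. {0..W}) \<Longrightarrow> moment_misfit n z G w \<le> moment_misfit n z G v"
    by (rule continuous_map_attains_min; blast)
  show ?thesis
  proof (rule that)
    show "\<forall>t\<in>G. 0 \<le> w t" using w(1) by auto
    fix v :: "real \<Rightarrow> real" assume v: "\<forall>t\<in>G. 0 \<le> v t"
    show "moment_misfit n z G w \<le> moment_misfit n z G v"
    proof (cases "\<forall>t\<in>G. v t \<le> W")
      case True
      then show ?thesis using w(2)[of "restrict v G"] v by (auto simp: moment_misfit_restrict)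
    next
      case False
      then obtain t where "t \<in> G" "W < v t" by auto
      then have "moment_misfit n z G (\<lambda>_. 0) < moment_misfit n z G v"
        using moment_misfit_heavy_atom[OF assms v] by (simp add: W_def)
      moreover have "moment_misfit n z G w \<le> moment_misfit n z G (\<lambda>_. 0)"
        using w(2)[of "restrict (\<lambda>_. 0) G"] \<open>0 \<le> W\<close> by (auto simp: moment_misfit_restrict)
      ultimately show ?thesis by simp
    qed
  qed
qed

lemma moment_misfit_min_optimality:
  assumes "finite G" and w: "\<forall>t\<in>G. 0 \<le> w t"
    and min: "\<And>v. \<forall>t\<in>G. 0 \<le> v t \<Longrightarrow> moment_misfit n z G w \<le> moment_misfit n z G v"
  defines "q \<equiv> \<lambda>k. atomic_moment G w k - z k"
  shows "\<forall>t\<in>G. 0 \<le> coeffs_eval n q t" and "moment_pairing n (atomic_moment G w) q \<le> 0"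
proof -
  have first_variation: "0 \<le> moment_pairing n (atomic_moment G d) q"
    if admissible: "\<And>e. 0 < e \<Longrightarrow> e \<le> 1 \<Longrightarrow> \<forall>t\<in>G. 0 \<le> w t + e * d t" for d
  proof -
    have "0 \<le> e * (2 * moment_pairing n (atomic_moment G d) q) + e\<^sup>2 * (\<Sum>k\<le>n. (atomic_moment G d k)\<^sup>2)"
      if "0 < e" "e \<le> 1" for e
    proof -
      have "moment_misfit n z G (\<lambda>t. w t + e * d t) = (\<Sum>k\<le>n. (q k + e * atomic_moment G d k)\<^sup>2)"
        by (simp add: moment_misfit_def atomic_moment_linear q_def algebra_simps)
      also have "\<dots> = moment_misfit n z G w + e * (2 * moment_pairing n (atomic_moment G d) q)
                        + e\<^sup>2 * (\<Sum>k\<le>n. (atomic_moment G d k)\<^sup>2)"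
        by (simp add: sum_square_add_scaled moment_misfit_def moment_pairing_def q_def)
      finally show ?thesis using min[OF admissible[OF that]] by simp
    qed
    then have "0 \<le> 2 * moment_pairing n (atomic_moment G d) q"
      by (rule nonneg_if_quadratic_nonneg_near_0) (auto intro: sum_nonneg)
    then show ?thesis by simp
  qed
  show "\<forall>t\<in>G. 0 \<le> coeffs_eval n q t"
  proof
    fix t assume "t \<in> G"
    then have "atomic_moment G (\<lambda>s. of_bool (s = t)) = (\<lambda>k. t ^ k)"
      using assms(1) by (simp add: atomic_moment_def fun_eq_iff)
    moreover have "0 \<le> moment_pairing n (atomic_moment G (\<lambda>s. of_bool (s = t))) q"
      using w by (intro first_variation) auto
    ultimately show "0 \<le> coeffs_eval n q t"
      by (simp add: moment_pairing_def coeffs_eval_def)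
  qed
  have "atomic_moment G (\<lambda>t. - w t) = (\<lambda>k. - atomic_moment G w k)"
    by (simp add: atomic_moment_def sum_negf fun_eq_iff)
  moreover have "0 \<le> moment_pairing n (atomic_moment G (\<lambda>t. - w t)) q"
  proof (rule first_variation)
    fix e :: real assume "0 < e" "e \<le> 1"
    then show "\<forall>t\<in>G. 0 \<le> w t + e * - w t"
      using w by (auto simp: algebra_simps intro: mult_left_le_one_le)
  qed
  ultimately show "moment_pairing n (atomic_moment G w) q \<le> 0"
    by (simp add: moment_pairing_def sum_negf)
qed

lemma uniformly_positive_on_imp_atomic_moments:
  assumes "uniformly_positive_on n z a b \<delta>" "0 < \<delta>"
  obtains G w where "finite G" "G \<subseteq> {a..b}" "\<forall>t\<in>G. 0 \<le> w t" "\<forall>k\<le>n. atomic_moment G w k = z k"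
proof -
  obtain G where G: "finite G" "G \<subseteq> {a..b}"
    and grid: "\<And>q. \<forall>t\<in>G. 0 \<le> coeffs_eval n q t \<Longrightarrow> 0 \<le> moment_pairing n z q"
    using uniformly_positive_on_finite_grid[OF assms] by blast
  obtain w where w: "\<forall>t\<in>G. 0 \<le> w t"
    and min: "\<And>v. \<forall>t\<in>G. 0 \<le> v t \<Longrightarrow> moment_misfit n z G w \<le> moment_misfit n z G v"
    using moment_misfit_attains_min[OF G(1)] by blast
  define q where "q = (\<lambda>k. atomic_moment G w k - z k)"
  have "0 \<le> moment_pairing n z q"
    using grid moment_misfit_min_optimality(1)[OF G(1) w min] by (simp add: q_def)
  moreover have "moment_pairing n (atomic_moment G w) q \<le> 0"
    using moment_misfit_min_optimality(2)[OF G(1) w min] by (simp add: q_def)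
  moreover have "moment_pairing n z q = moment_pairing n (atomic_moment G w) q - (\<Sum>k\<le>n. (q k)\<^sup>2)"
    by (simp add: moment_pairing_def q_def power2_eq_square algebra_simps sum_subtractf[symmetric])
  ultimately have "(\<Sum>k\<le>n. (q k)\<^sup>2) \<le> 0" by linarith
  then have "\<forall>k\<le>n. q k = 0" using sum_nonneg_eq_0_iff[of "{..n}" "\<lambda>k. (q k)\<^sup>2"]
    by (simp add: order_antisym sum_nonneg)
  then show ?thesis using that G w by (simp add: q_def)
qed

section \<open>Representing measures\<close>

lemma finite_atomic_measure:
  fixes F :: "real set" and \<omega> :: "real \<Rightarrow> real"
  assumes "finite F" "F \<subseteq> {c..d}" "\<forall>t\<in>F. 0 \<le> \<omega> t"
  obtains \<mu> where "sets \<mu> = sets (restrict_space borel {c..d})"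
    "\<And>f::real \<Rightarrow> real. f \<in> borel_measurable borel \<Longrightarrow>
       integrable \<mu> f \<and> integral\<^sup>L \<mu> f = (\<Sum>t\<in>F. \<omega> t * f t)"
proof -
  define N where "N = density (count_space F) (\<lambda>t. ennreal (\<omega> t))"
  have meas: "(\<lambda>t. t) \<in> measurable N (restrict_space borel {c..d})"
    using assms by (auto simp: N_def)
  have ae: "AE t in count_space F. 0 \<le> \<omega> t"
    using assms by (simp add: AE_count_space)
  show ?thesis
  proof (rule that[of "distr N (restrict_space borel {c..d}) (\<lambda>t. t)"])
    fix f :: "real \<Rightarrow> real" assume "f \<in> borel_measurable borel"
    then have f: "f \<in> borel_measurable (restrict_space borel {c..d})"
      by (simp add: measurable_restrict_space1)
    have "integrable N f"
      unfolding N_def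
      by (subst integrable_density) (use assms ae in \<open>auto intro: integrable_count_space\<close>)
    moreover have "integral\<^sup>L N f = (\<Sum>t\<in>F. \<omega> t * f t)"
      unfolding N_def using assms
      by (subst integral_density) (use ae in \<open>auto simp: lebesgue_integral_count_space_finite\<close>)
    ultimately show "integrable (distr N (restrict_space borel {c..d}) (\<lambda>t. t)) f \<and>
        integral\<^sup>L (distr N (restrict_space borel {c..d}) (\<lambda>t. t)) f = (\<Sum>t\<in>F. \<omega> t * f t)"
      by (simp add: integrable_distr_eq[OF meas f] integral_distr[OF meas f])
  qed simp
qed

lemma atomic_moment_measure:
  assumes "finite F" "F \<subseteq> {c..d}" "\<forall>t\<in>F. 0 \<le> \<omega> t" "\<forall>k\<le>n. atomic_moment F \<omega> k = s k"
  obtains \<mu> where "\<mu> \<in> moment_measures n s c d" "(\<integral>t. 1 / t \<partial>\<mu>) = (\<Sum>t\<in>F. \<omega> t / t)"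
proof -
  obtain \<mu> where \<mu>: "sets \<mu> = sets (restrict_space borel {c..d})"
    "\<And>f::real \<Rightarrow> real. f \<in> borel_measurable borel \<Longrightarrow>
       integrable \<mu> f \<and> integral\<^sup>L \<mu> f = (\<Sum>t\<in>F. \<omega> t * f t)"
    using finite_atomic_measure[OF assms(1-3)] by blast
  have "\<mu> \<in> moment_measures n s c d"
    using \<mu> assms(4) by (simp add: moment_measures_def atomic_moment_def)
  moreover have "(\<integral>t. 1 / t \<partial>\<mu>) = (\<Sum>t\<in>F. \<omega> t / t)"
    using \<mu>(2)[of "\<lambda>t. 1 / t"] by simp
  ultimately show ?thesis by (rule that)
qed

lemma moment_measure_le_T_inf:
  assumes "\<mu> \<in> moment_measures n s c d" "0 < c" "c < d"
  shows "ereal (\<integral>t. 1 / t \<partial>\<mu>) \<le> T_inf n s"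
proof -
  have "ereal (\<integral>t. 1 / t \<partial>\<mu>) \<le> T_ab n s c d"
    unfolding T_ab_def by (rule SUP_upper[OF assms(1)])
  also have "\<dots> \<le> T_inf n s"
    unfolding T_inf_def using assms by (intro SUP_upper2[of "(c, d)"]) auto
  finally show ?thesis .
qed

lemma moment_measure_with_atom:
  assumes "uniformly_positive_on n s a b \<delta>" "0 \<le> w" "w < \<delta>" "0 < c" "c < a" "a \<le> b" "c \<le> 1"
  obtains \<mu> where "\<mu> \<in> moment_measures n s c b" "w / c \<le> (\<integral>t. 1 / t \<partial>\<mu>)"
proof -
  have "uniformly_positive_on n (\<lambda>k. s k - w * c ^ k) a b (\<delta> - w)"
    using assms by (intro uniformly_positive_on_remove_atom) auto
  moreover have "0 < \<delta> - w" using \<open>w < \<delta>\<close> by simp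
  ultimately obtain G \<omega> where G: "finite G" "G \<subseteq> {a..b}" "\<forall>t\<in>G. 0 \<le> \<omega> t"
    and moments: "\<forall>k\<le>n. atomic_moment G \<omega> k = s k - w * c ^ k"
    by (rule uniformly_positive_on_imp_atomic_moments)
  define \<omega>' where "\<omega>' t = (if t = c then w else \<omega> t)" for t
  have "c \<notin> G" using G(2) \<open>c < a\<close> by auto
  then have sum_insert: "(\<Sum>t\<in>insert c G. \<omega>' t * f t) = w * f c + (\<Sum>t\<in>G. \<omega> t * f t)"
    for f :: "real \<Rightarrow> real"
    using G(1) by (auto simp: \<omega>'_def intro!: sum.cong)
  have "finite (insert c G)" "insert c G \<subseteq> {c..b}" "\<forall>t\<in>insert c G. 0 \<le> \<omega>' t"
    using G assms by (auto simp: \<omega>'_def)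
  moreover have "\<forall>k\<le>n. atomic_moment (insert c G) \<omega>' k = s k"
    using moments by (simp add: atomic_moment_def sum_insert)
  ultimately obtain \<mu> where \<mu>: "\<mu> \<in> moment_measures n s c b"
    and integral: "(\<integral>t. 1 / t \<partial>\<mu>) = (\<Sum>t\<in>insert c G. \<omega>' t / t)"
    by (rule atomic_moment_measure)
  have "(\<Sum>t\<in>G. \<omega> t * (1 / t)) \<ge> 0"
    using G(2,3) \<open>c < a\<close> \<open>0 < c\<close> by (intro sum_nonneg) auto
  then have "w / c \<le> (\<integral>t. 1 / t \<partial>\<mu>)"
    using integral sum_insert[of "\<lambda>t. 1 / t"] by simp
  with \<mu> show ?thesis by (rule that)
qed

theorem lemma5p2:
  fixes n :: nat and s :: "nat \<Rightarrow> real"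
  assumes "\<forall>k\<le>n. s k \<ge> 0"
    and "strictly_positive_pos n s"
  shows "T_inf n s = \<infinity>"
proof (rule ereal_top)
  fix M :: real
  obtain a b where ab: "0 < a" "a < b" and spo: "strictly_positive_on n s a b"
    using assms(2) by (auto simp: strictly_positive_pos_def)
  obtain \<delta> where "0 < \<delta>" "uniformly_positive_on n s a b \<delta>"
    using strictly_positive_on_imp_uniformly_positive_on[OF spo] by blast
  define w where "w = \<delta> / 2"
  define c where "c = min (a / 2) (min 1 (w / (\<bar>M\<bar> + 1)))"
  have c: "0 < c" "c < a" "c \<le> 1" and w: "0 < w" "w < \<delta>"
    using ab \<open>0 < \<delta>\<close> by (auto simp: c_def w_def)
  have "c \<le> w / (\<bar>M\<bar> + 1)" by (simp add: c_def)
  then have "\<bar>M\<bar> + 1 \<le> w / c" using c by (simp add: field_simps)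
  then have "M \<le> w / c" by linarith
  obtain \<mu> where "\<mu> \<in> moment_measures n s c b" "w / c \<le> (\<integral>t. 1 / t \<partial>\<mu>)"
    using \<open>uniformly_positive_on n s a b \<delta>\<close> w c ab
    by (elim moment_measure_with_atom) auto
  then have "ereal M \<le> ereal (\<integral>t. 1 / t \<partial>\<mu>)" using \<open>M \<le> w / c\<close> by simp
  also have "\<dots> \<le> T_inf n s"
    using c ab by (intro moment_measure_le_T_inf[OF \<open>\<mu> \<in> moment_measures n s c b\<close>]) auto
  finally show "ereal M \<le> T_inf n s" .
qed

end
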